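(* Let $f_6(\tau)=\displaystyle\int_i^{\tau}\eta(z)^4\,dz$ for $\tau\in\mathfrak{H}$. Then \[ \{f_6,\tau\}=\frac{2\pi^2}{36}\,E_4(\tau). \]
   Context: $\mathfrak{H}$ is the complex upper half-plane, $q=e^{2\pi i\tau}$. $\eta(\tau)=q^{1/24}\prod_{m\geq1}(1-q^m)$ is the Dedekind eta function and $E_4(\tau)=1+240\sum_{m\geq1}\sigma_3(m)q^m$, $\sigma_3(m)=\sum_{0<d\mid m}d^3$, is the weight $4$ Eisenstein series. For a meromorphic function $f$, the Schwarz derivative is $\{f,\tau\}=\frac{f'''}{f'}-\frac32\left(\frac{f''}{f'}\right)^2$. *)

theory Defs
  imports "HOL-Complex_Analysis.Complex_Analysis"
begin

definition qnome :: "complex \<Rightarrow> complex" where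
  "qnome \<tau> = exp (2 * complex_of_real pi * \<i> * \<tau>)"

definition dedekind_eta :: "complex \<Rightarrow> complex" where
  "dedekind_eta \<tau> = exp (2 * complex_of_real pi * \<i> * \<tau> / 24) *
     (\<Prod>m. (1 - qnome \<tau> ^ Suc m))"

definition sigma3 :: "nat \<Rightarrow> nat" where
  "sigma3 n = (\<Sum>d\<in>{d. 0 < d \<and> d dvd n}. d ^ 3)"

definition eisenstein_E4 :: "complex \<Rightarrow> complex" where
  "eisenstein_E4 \<tau> = 1 + 240 * (\<Sum>m. of_nat (sigma3 (Suc m)) * qnome \<tau> ^ Suc m)"

definition schwarzian :: "(complex \<Rightarrow> complex) \<Rightarrow> complex \<Rightarrow> complex" where
  "schwarzian f \<tau> = (deriv ^^ 3) f \<tau> / deriv f \<tau>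
      - 3 / 2 * ((deriv ^^ 2) f \<tau> / deriv f \<tau>) ^ 2"

text \<open>f_6(tau) = integral from i to tau of eta^4; the upper half-plane is convex and
  eta^4 is holomorphic there, so the integral is taken along the straight segment.\<close>
definition f6 :: "complex \<Rightarrow> complex" where
  "f6 \<tau> = contour_integral (linepath \<i> \<tau>) (\<lambda>z. dedekind_eta z ^ 4)"

end

theory Submission
  imports Defs
begin

text \<open>
  Expanding the logarithm of the product gives
  eta(tau)^4 = exp (pi i tau / 3 - 4 L(q)) with L(q) = sum_n sigma(n)/n q^n, and since
  q dL/dq = sum_n sigma(n) q^n this yields (eta^4)' = h eta^4 with h = (pi i / 3) E2.
  As f6' = eta^4, the Schwarzian of f6 is h' - h^2/2. Ramanujan's identity
  q dE2/dq = (E2^2 - E4)/12 makes h' = -(pi^2/18)(E2^2 - E4), so the E2^2 terms cancel and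
  (pi^2/18) E4 remains. Ramanujan's identity itself is the coefficient identity
  12 sum_{i<=n} sigma(i) sigma(n-i) = 5 sigma_3(n) + (1 - 6n) sigma(n), which we prove in
  Liouville's elementary way: both sides are sums over the positive solutions of
  ax + by = n, related by the shears (a,b,x,y) -> (a-b,b,x,x+y) and (a,b-a,x+y,y).
\<close>

section \<open>Ramanujan's divisor-sum identity\<close>

definition divisors :: "nat \<Rightarrow> nat set" where
  "divisors n = {d \<in> {1..n}. d dvd n}"

definition divisor_sigma :: "nat \<Rightarrow> nat \<Rightarrow> nat" where
  "divisor_sigma k n = (\<Sum>d\<in>divisors n. d ^ k)"

lemma finite_divisors [simp]: "finite (divisors n)"
  by (simp add: divisors_def)

lemma card_divisors_le: "card (divisors n) \<le> n"
proof -
  have "card (divisors n) \<le> card {1..n}" by (rule card_mono) (auto simp: divisors_def)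
  then show ?thesis by simp
qed

lemma divisor_sigma_le: "divisor_sigma k n \<le> n ^ Suc k"
proof -
  have "divisor_sigma k n \<le> (\<Sum>d\<in>divisors n. n ^ k)"
    unfolding divisor_sigma_def by (rule sum_mono) (simp add: divisors_def power_mono)
  also have "\<dots> \<le> n * n ^ k"
    using card_divisors_le by (simp add: mult_right_mono)
  finally show ?thesis by simp
qed

lemma divisor_sigma_0 [simp]: "divisor_sigma k 0 = 0"
  by (simp add: divisor_sigma_def divisors_def)

lemma sigma3_eq_divisor_sigma: "sigma3 n = divisor_sigma 3 n"
proof (cases "n = 0")
  case True
  \<comment> \<open>sigma3 0 = 0 only because the divisors of 0 form an infinite set\<close>
  have "{d::nat. 0 < d \<and> d dvd 0} = - {0}" by auto
  then show ?thesis using True by (simp add: sigma3_def)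
next
  case False
  then have "{d. 0 < d \<and> d dvd n} = divisors n" by (auto simp: divisors_def dvd_imp_le)
  then show ?thesis by (simp add: sigma3_def divisor_sigma_def)
qed

definition ax_by_solutions :: "nat \<Rightarrow> (nat \<times> nat \<times> nat \<times> nat) set" where
  "ax_by_solutions n = {(a, b, x, y). 0 < a \<and> 0 < b \<and> 0 < x \<and> 0 < y \<and> a * x + b * y = n}"

lemma ax_by_solutions_bounded:
  assumes "(a, b, x, y) \<in> ax_by_solutions n"
  shows "a \<le> n" "b \<le> n" "x \<le> n" "y \<le> n"
proof -
  have pos: "0 < a" "0 < b" "0 < x" "0 < y" and n: "a * x + b * y = n"
    using assms by (auto simp: ax_by_solutions_def)
  have "a \<le> a * x" "x \<le> a * x" "b \<le> b * y" "y \<le> b * y"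
    using pos by simp_all
  then show "a \<le> n" "b \<le> n" "x \<le> n" "y \<le> n"
    using n by linarith+
qed

lemma finite_ax_by_solutions [simp]: "finite (ax_by_solutions n)"
proof (rule finite_subset)
  show "ax_by_solutions n \<subseteq> {..n} \<times> {..n} \<times> {..n} \<times> {..n}"
    using ax_by_solutions_bounded by fastforce
qed auto

lemma sum_ax_by_solutions_swap:
  "(\<Sum>(a,b,x,y)\<in>{(a,b,x,y)\<in>ax_by_solutions n. P a b x y}. G (b,a,y,x)) =
   (\<Sum>(a,b,x,y)\<in>{(a,b,x,y)\<in>ax_by_solutions n. P b a y x}. G (a,b,x,y))"
  by (rule sum.reindex_bij_witness[where j="\<lambda>(a,b,x,y). (b,a,y,x)" and i="\<lambda>(a,b,x,y). (b,a,y,x)"])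
     (auto simp: ax_by_solutions_def)

lemma sum_ax_by_solutions_shear_left:
  "(\<Sum>(a,b,x,y)\<in>{(a,b,x,y)\<in>ax_by_solutions n. b < a}. G (a - b, b, x, x + y)) =
   (\<Sum>(a,b,x,y)\<in>{(a,b,x,y)\<in>ax_by_solutions n. x < y}. G (a, b, x, y))"
  by (rule sum.reindex_bij_witness[where j="\<lambda>(a,b,x,y). (a-b,b,x,x+y)" and i="\<lambda>(a,b,x,y). (a+b,b,x,y-x)"])
     (auto simp: ax_by_solutions_def algebra_simps diff_mult_distrib2 diff_mult_distrib less_imp_le
        mult_le_mono1 trans_le_add1)

lemma sum_ax_by_solutions_shear_right:
  "(\<Sum>(a,b,x,y)\<in>{(a,b,x,y)\<in>ax_by_solutions n. a < b}. G (a, b - a, x + y, y)) =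
   (\<Sum>(a,b,x,y)\<in>{(a,b,x,y)\<in>ax_by_solutions n. y < x}. G (a, b, x, y))"
  using sum_ax_by_solutions_shear_left[where n=n and G="\<lambda>(a,b,x,y). G (b,a,y,x)"]
    sum_ax_by_solutions_swap[where n=n and P="\<lambda>a b x y. b < a" and G="\<lambda>(a,b,x,y). G (a, b - a, x + y, y)"]
    sum_ax_by_solutions_swap[where n=n and P="\<lambda>a b x y. x < y" and G=G]
  by (simp add: add.commute)

lemma divisor_sigma_convolution_eq_sum_ax_by_solutions:
  "(\<Sum>i\<le>n. divisor_sigma 1 i * divisor_sigma 1 (n - i)) = (\<Sum>(a,b,x,y)\<in>ax_by_solutions n. a * b)"
proof -
  have "(\<Sum>i\<le>n. divisor_sigma 1 i * divisor_sigma 1 (n - i)) =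
        (\<Sum>(i,a,b)\<in>Sigma {..n} (\<lambda>i. divisors i \<times> divisors (n - i)). a * b)"
    by (simp add: divisor_sigma_def sum_product sum.cartesian_product sum.Sigma)
  also have "\<dots> = (\<Sum>(a,b,x,y)\<in>ax_by_solutions n. a * b)"
  proof (rule sum.reindex_bij_witness[where j="\<lambda>(i,a,b). (a, b, i div a, (n - i) div b)"
                                        and i="\<lambda>(a,b,x,y). (a * x, a, b)"])
    fix p assume "p \<in> Sigma {..n} (\<lambda>i. divisors i \<times> divisors (n - i))"
    then obtain i a b where p: "p = (i, a, b)" "i \<le> n" "1 \<le> a" "a \<le> i" "a dvd i" "1 \<le> b" "b \<le> n - i" "b dvd (n - i)"
      by (auto simp: divisors_def)
    then show "(case case p of (i,a,b) \<Rightarrow> (a, b, i div a, (n - i) div b) of (a,b,x,y) \<Rightarrow> (a * x, a, b)) = p"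
      "(case p of (i,a,b) \<Rightarrow> (a, b, i div a, (n - i) div b)) \<in> ax_by_solutions n"
      "(case case p of (i,a,b) \<Rightarrow> (a, b, i div a, (n - i) div b) of (a,b,x,y) \<Rightarrow> a * b) =
       (case p of (i,a,b) \<Rightarrow> a * b)"
      by (auto simp: ax_by_solutions_def elim!: dvdE)
  next
    fix p assume "p \<in> ax_by_solutions n"
    then obtain a b x y where p: "p = (a, b, x, y)" "0 < a" "0 < b" "0 < x" "0 < y" "a * x + b * y = n"
      by (auto simp: ax_by_solutions_def)
    have "a \<le> a * x" "b \<le> b * y" using p by simp_all
    then show "(case case p of (a,b,x,y) \<Rightarrow> (a * x, a, b) of (i,a,b) \<Rightarrow> (a, b, i div a, (n - i) div b)) = p"
      "(case p of (a,b,x,y) \<Rightarrow> (a * x, a, b)) \<in> Sigma {..n} (\<lambda>i. divisors i \<times> divisors (n - i))"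
      using p by (auto simp: divisors_def)
  qed
  finally show ?thesis .
qed

lemma sum_split_by_order:
  fixes A :: "('a \<times> 'b \<times> 'c \<times> 'd) set" and u v :: "'a \<Rightarrow> 'b \<Rightarrow> 'c \<Rightarrow> 'd \<Rightarrow> 'e::linorder"
  assumes "finite A"
  shows "sum f A = sum f {(a,b,x,y)\<in>A. u a b x y < v a b x y} + sum f {(a,b,x,y)\<in>A. v a b x y < u a b x y}
                   + sum f {(a,b,x,y)\<in>A. u a b x y = v a b x y}"
proof -
  let ?L = "{(a,b,x,y)\<in>A. u a b x y < v a b x y}" and ?G = "{(a,b,x,y)\<in>A. v a b x y < u a b x y}"
    and ?E = "{(a,b,x,y)\<in>A. u a b x y = v a b x y}"
  have "A = (?L \<union> ?G) \<union> ?E"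
    by (auto simp: not_less_iff_gr_or_eq)
  moreover have "sum f ((?L \<union> ?G) \<union> ?E) = sum f (?L \<union> ?G) + sum f ?E"
    by (rule sum.union_disjoint) (use assms in \<open>auto intro: finite_subset\<close>)
  moreover have "sum f (?L \<union> ?G) = sum f ?L + sum f ?G"
    by (rule sum.union_disjoint) (use assms in \<open>auto intro: finite_subset\<close>)
  ultimately show ?thesis by simp
qed

lemma sum_ax_by_solutions_add_square_split_xy:
  "(\<Sum>(a,b,x,y)\<in>ax_by_solutions n. (a + b)^2) =
     2 * (\<Sum>(a,b,x,y)\<in>{(a,b,x,y)\<in>ax_by_solutions n. b < a}. a^2)
     + (\<Sum>(a,b,x,y)\<in>{(a,b,x,y)\<in>ax_by_solutions n. x = y}. (a + b)^2)"
proof -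
  have "(\<Sum>(a,b,x,y)\<in>{(a,b,x,y)\<in>ax_by_solutions n. x < y}. (a + b)^2) =
        (\<Sum>(a,b,x,y)\<in>{(a,b,x,y)\<in>ax_by_solutions n. b < a}. (a - b + b)^2)"
    using sum_ax_by_solutions_shear_left[where G="\<lambda>(a,b,x,y). (a + b)^2"] by simp
  also have "\<dots> = (\<Sum>(a,b,x,y)\<in>{(a,b,x,y)\<in>ax_by_solutions n. b < a}. a^2)"
    by (intro sum.cong) auto
  finally have lt: "(\<Sum>(a,b,x,y)\<in>{(a,b,x,y)\<in>ax_by_solutions n. x < y}. (a + b)^2) =
        (\<Sum>(a,b,x,y)\<in>{(a,b,x,y)\<in>ax_by_solutions n. b < a}. a^2)" .
  have "(\<Sum>(a,b,x,y)\<in>{(a,b,x,y)\<in>ax_by_solutions n. y < x}. (a + b)^2) =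
        (\<Sum>(a,b,x,y)\<in>{(a,b,x,y)\<in>ax_by_solutions n. a < b}. (a + (b - a))^2)"
    using sum_ax_by_solutions_shear_right[where G="\<lambda>(a,b,x,y). (a + b)^2"] by simp
  also have "\<dots> = (\<Sum>(a,b,x,y)\<in>{(a,b,x,y)\<in>ax_by_solutions n. a < b}. b^2)"
    by (intro sum.cong) auto
  also have "\<dots> = (\<Sum>(a,b,x,y)\<in>{(a,b,x,y)\<in>ax_by_solutions n. b < a}. a^2)"
    using sum_ax_by_solutions_swap[where P="\<lambda>a b x y. a < b" and G="\<lambda>(a,b,x,y). a^2"] by simp
  finally have gt: "(\<Sum>(a,b,x,y)\<in>{(a,b,x,y)\<in>ax_by_solutions n. y < x}. (a + b)^2) =
        (\<Sum>(a,b,x,y)\<in>{(a,b,x,y)\<in>ax_by_solutions n. b < a}. a^2)" .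
  show ?thesis
    using sum_split_by_order[where f="\<lambda>(a,b,x,y). (a + b)^2" and u="\<lambda>a b x y. x"
        and v="\<lambda>a b x y. y", OF finite_ax_by_solutions[of n]] lt gt
    by simp
qed

lemma sum_ax_by_solutions_add_square_split_ab:
  "(\<Sum>(a,b,x,y)\<in>ax_by_solutions n. (a + b)^2) =
     4 * (\<Sum>(a,b,x,y)\<in>ax_by_solutions n. a * b)
     + 2 * (\<Sum>(a,b,x,y)\<in>{(a,b,x,y)\<in>ax_by_solutions n. x < y}. a^2)"
proof -
  have sq: "(a + b)^2 = 4 * (a * b) + (a - b)^2 + (b - a)^2" for a b :: nat
  proof (cases "a \<le> b")
    case True
    then obtain c where "b = a + c" using le_iff_add by blast
    then show ?thesis by (simp add: power2_eq_square algebra_simps)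
  next
    case False
    then obtain c where "a = b + c" using le_iff_add nat_le_linear by blast
    then show ?thesis by (simp add: power2_eq_square algebra_simps)
  qed
  have "(\<Sum>(a,b,x,y)\<in>ax_by_solutions n. (a - b)^2) =
        (\<Sum>(a,b,x,y)\<in>{(a,b,x,y)\<in>ax_by_solutions n. b < a}. (a - b)^2)"
    by (rule sum.mono_neutral_right) auto
  also have "\<dots> = (\<Sum>(a,b,x,y)\<in>{(a,b,x,y)\<in>ax_by_solutions n. x < y}. a^2)"
    using sum_ax_by_solutions_shear_left[where G="\<lambda>(a,b,x,y). a^2"] by simp
  finally have diff: "(\<Sum>(a,b,x,y)\<in>ax_by_solutions n. (a - b)^2) =
        (\<Sum>(a,b,x,y)\<in>{(a,b,x,y)\<in>ax_by_solutions n. x < y}. a^2)" .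
  have "(\<Sum>(a,b,x,y)\<in>ax_by_solutions n. (b - a)^2) = (\<Sum>(a,b,x,y)\<in>ax_by_solutions n. (a - b)^2)"
    using sum_ax_by_solutions_swap[where P="\<lambda>a b x y. True" and G="\<lambda>(a,b,x,y). (a - b)^2"] by simp
  moreover have "(\<Sum>(a,b,x,y)\<in>ax_by_solutions n. (a + b)^2) =
      4 * (\<Sum>(a,b,x,y)\<in>ax_by_solutions n. a * b) + (\<Sum>(a,b,x,y)\<in>ax_by_solutions n. (a - b)^2)
      + (\<Sum>(a,b,x,y)\<in>ax_by_solutions n. (b - a)^2)"
    by (simp add: sq sum.distrib sum_distrib_left case_prod_unfold)
  ultimately show ?thesis
    using diff by simp
qed

lemma sum_ax_by_solutions_square_split:
  "(\<Sum>(a,b,x,y)\<in>{(a,b,x,y)\<in>ax_by_solutions n. b < a}. a^2)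
     + (\<Sum>(a,b,x,y)\<in>{(a,b,x,y)\<in>ax_by_solutions n. a = b}. a^2) =
   (\<Sum>(a,b,x,y)\<in>{(a,b,x,y)\<in>ax_by_solutions n. x < y}. a^2)
     + (\<Sum>(a,b,x,y)\<in>{(a,b,x,y)\<in>ax_by_solutions n. x = y}. a^2)"
proof -
  have "(\<Sum>(a,b,x,y)\<in>{(a,b,x,y)\<in>ax_by_solutions n. a < b}. a^2) =
        (\<Sum>(a,b,x,y)\<in>{(a,b,x,y)\<in>ax_by_solutions n. y < x}. a^2)"
    using sum_ax_by_solutions_shear_right[where G="\<lambda>(a,b,x,y). a^2"] by simp
  then show ?thesis
    using sum_split_by_order[where f="\<lambda>(a,b,x,y). a^2" and u="\<lambda>a b x y. a"
        and v="\<lambda>a b x y. b", OF finite_ax_by_solutions[of n]]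
      sum_split_by_order[where f="\<lambda>(a,b,x,y). a^2" and u="\<lambda>a b x y. x"
        and v="\<lambda>a b x y. y", OF finite_ax_by_solutions[of n]]
    by simp
qed

lemma sum_ax_by_solutions_identity:
  "4 * (\<Sum>(a,b,x,y)\<in>ax_by_solutions n. a * b)
     + 2 * (\<Sum>(a,b,x,y)\<in>{(a,b,x,y)\<in>ax_by_solutions n. a = b}. a^2) =
   2 * (\<Sum>(a,b,x,y)\<in>{(a,b,x,y)\<in>ax_by_solutions n. x = y}. a^2)
     + (\<Sum>(a,b,x,y)\<in>{(a,b,x,y)\<in>ax_by_solutions n. x = y}. (a + b)^2)"
  using sum_ax_by_solutions_add_square_split_xy[of n] sum_ax_by_solutions_add_square_split_ab[of n]
    sum_ax_by_solutions_square_split[of n]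
  by linarith

lemma sum_ax_by_solutions_diagonal_ab:
  "(\<Sum>(a,b,x,y)\<in>{(a,b,x,y)\<in>ax_by_solutions n. a = b}. a^2) = (\<Sum>d\<in>divisors n. (n div d - 1) * d^2)"
proof -
  have "(\<Sum>(a,b,x,y)\<in>{(a,b,x,y)\<in>ax_by_solutions n. a = b}. a^2) =
        (\<Sum>(d,x)\<in>Sigma (divisors n) (\<lambda>d. {1..<n div d}). d^2)"
  proof (rule sum.reindex_bij_witness[where j="\<lambda>(a,b,x,y). (a, x)" and i="\<lambda>(d,x). (d, d, x, n div d - x)"])
    fix p assume "p \<in> {(a,b,x,y)\<in>ax_by_solutions n. a = b}"
    then obtain a x y where p: "p = (a, a, x, y)" "0 < a" "0 < x" "0 < y" "a * (x + y) = n"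
      by (auto simp: ax_by_solutions_def algebra_simps)
    then have "n div a = x + y" "a \<le> n" "a dvd n"
      by (auto simp: dvd_imp_le)
    then show "(case case p of (a,b,x,y) \<Rightarrow> (a, x) of (d,x) \<Rightarrow> (d, d, x, n div d - x)) = p"
      "(case p of (a,b,x,y) \<Rightarrow> (a, x)) \<in> Sigma (divisors n) (\<lambda>d. {1..<n div d})"
      "(case case p of (a,b,x,y) \<Rightarrow> (a, x) of (d,x) \<Rightarrow> d^2) = (case p of (a,b,x,y) \<Rightarrow> a^2)"
      using p by (auto simp: divisors_def)
  next
    fix q assume "q \<in> Sigma (divisors n) (\<lambda>d. {1..<n div d})"
    then obtain d x where q: "q = (d, x)" "1 \<le> d" "d dvd n" "1 \<le> x" "x < n div d"
      by (auto simp: divisors_def)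
    have "d * x + d * (n div d - x) = d * (n div d)"
      using q(5) by (simp add: diff_mult_distrib2)
    also have "\<dots> = n" using q(3) by simp
    finally show "(case case q of (d,x) \<Rightarrow> (d, d, x, n div d - x) of (a,b,x,y) \<Rightarrow> (a, x)) = q"
      "(case q of (d,x) \<Rightarrow> (d, d, x, n div d - x)) \<in> {(a,b,x,y)\<in>ax_by_solutions n. a = b}"
      using q by (auto simp: ax_by_solutions_def)
  qed
  also have "\<dots> = (\<Sum>d\<in>divisors n. (n div d - 1) * d^2)"
    by (subst sum.Sigma [symmetric]) auto
  finally show ?thesis .
qed

lemma sum_ax_by_solutions_diagonal_xy:
  "(\<Sum>(a,b,x,y)\<in>{(a,b,x,y)\<in>ax_by_solutions n. x = y}. F a b) = (\<Sum>d\<in>divisors n. \<Sum>a\<in>{1..<d}. F a (d - a))"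
proof -
  have "(\<Sum>(a,b,x,y)\<in>{(a,b,x,y)\<in>ax_by_solutions n. x = y}. F a b) =
        (\<Sum>(d,a)\<in>Sigma (divisors n) (\<lambda>d. {1..<d}). F a (d - a))"
  proof (rule sum.reindex_bij_witness[where j="\<lambda>(a,b,x,y). (a + b, a)" and i="\<lambda>(d,a). (a, d - a, n div d, n div d)"])
    fix p assume "p \<in> {(a,b,x,y)\<in>ax_by_solutions n. x = y}"
    then obtain a b x where p: "p = (a, b, x, x)" "0 < a" "0 < b" "0 < x" "(a + b) * x = n"
      by (auto simp: ax_by_solutions_def algebra_simps)
    then have "n div (a + b) = x" "a + b \<le> n" "a + b dvd n"
      by (auto simp: dvd_imp_le)
    then show "(case case p of (a,b,x,y) \<Rightarrow> (a + b, a) of (d,a) \<Rightarrow> (a, d - a, n div d, n div d)) = p"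
      "(case p of (a,b,x,y) \<Rightarrow> (a + b, a)) \<in> Sigma (divisors n) (\<lambda>d. {1..<d})"
      "(case case p of (a,b,x,y) \<Rightarrow> (a + b, a) of (d,a) \<Rightarrow> F a (d - a)) = (case p of (a,b,x,y) \<Rightarrow> F a b)"
      using p by (auto simp: divisors_def)
  next
    fix q assume "q \<in> Sigma (divisors n) (\<lambda>d. {1..<d})"
    then obtain d a where q: "q = (d, a)" "1 \<le> d" "d \<le> n" "d dvd n" "1 \<le> a" "a < d"
      by (auto simp: divisors_def)
    have "a * (n div d) + (d - a) * (n div d) = d * (n div d)"
      using q(6) by (simp add: diff_mult_distrib)
    also have "\<dots> = n" using q(4) by simp
    moreover have "0 < n div d" using q by (auto elim!: dvdE)
    ultimately show "(case case q of (d,a) \<Rightarrow> (a, d - a, n div d, n div d) of (a,b,x,y) \<Rightarrow> (a + b, a)) = q"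
      "(case q of (d,a) \<Rightarrow> (a, d - a, n div d, n div d)) \<in> {(a,b,x,y)\<in>ax_by_solutions n. x = y}"
      using q by (auto simp: ax_by_solutions_def)
  qed
  also have "\<dots> = (\<Sum>d\<in>divisors n. \<Sum>a\<in>{1..<d}. F a (d - a))"
    by (subst sum.Sigma [symmetric]) auto
  finally show ?thesis .
qed

lemma sum_squares_atLeast1_lessThan: "6 * (\<Sum>a\<in>{1..<d}. a^2) = (d - 1) * d * (2 * d - 1 :: nat)"
proof (induction d)
  case (Suc d)
  then show ?case
    by (cases d) (simp_all add: algebra_simps power2_eq_square)
qed simp

lemma ramanujan_divisor_sigma_identity:
  "12 * (\<Sum>i\<le>n. divisor_sigma 1 i * divisor_sigma 1 (n - i)) + 6 * n * divisor_sigma 1 n =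
   5 * divisor_sigma 3 n + divisor_sigma 1 n"
proof -
  define D where "D = (\<Sum>d\<in>divisors n. (n div d - 1) * d^2)"
  \<comment> \<open>per divisor, the identity is arranged additively so that no truncated subtraction occurs\<close>
  define T :: "nat \<Rightarrow> nat" where "T d = 6 * (\<Sum>a\<in>{1..<d}. a^2) + 3 * ((d - 1) * d^2)" for d
  have per_divisor: "T d + 6 * n * d = 5 * d^3 + d + 6 * ((n div d - 1) * d^2)" if "d \<in> divisors n" for d
  proof -
    have d: "1 \<le> d" "d \<le> n" "d dvd n" using that by (auto simp: divisors_def)
    then obtain e where e: "d = Suc e" by (cases d) auto
    from d obtain m where "n = d * m" by (auto elim: dvdE)
    with d obtain k where k: "n = d * Suc k" by (cases m) auto
    have squares: "6 * (\<Sum>a\<in>{1..<d}. a^2) = e * d * (2 * e + 1)"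
      using sum_squares_atLeast1_lessThan[of d] e by simp
    have "n div d = Suc k" using k d(1) by simp
    then show ?thesis
      unfolding T_def squares by (simp add: e k algebra_simps power2_eq_square power3_eq_cube)
  qed
  have "(\<Sum>a\<in>{1..<d}. (a + (d - a))^2) = (d - 1) * d^2" for d :: nat
    by (subst sum.cong[OF refl, of _ _ "\<lambda>_. d^2"]) auto
  then have "4 * (\<Sum>i\<le>n. divisor_sigma 1 i * divisor_sigma 1 (n - i)) + 2 * D =
             2 * (\<Sum>d\<in>divisors n. \<Sum>a\<in>{1..<d}. a^2) + (\<Sum>d\<in>divisors n. (d - 1) * d^2)"
    using sum_ax_by_solutions_identity[of n] divisor_sigma_convolution_eq_sum_ax_by_solutions[of n]
      sum_ax_by_solutions_diagonal_ab[of n] sum_ax_by_solutions_diagonal_xy[where n=n and F="\<lambda>a b. a^2"]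
      sum_ax_by_solutions_diagonal_xy[where n=n and F="\<lambda>a b. (a + b)^2"]
    by (simp add: D_def)
  moreover have "(\<Sum>d\<in>divisors n. T d) =
      6 * (\<Sum>d\<in>divisors n. \<Sum>a\<in>{1..<d}. a^2) + 3 * (\<Sum>d\<in>divisors n. (d - 1) * d^2)"
    by (simp add: T_def sum.distrib sum_distrib_left)
  ultimately have "12 * (\<Sum>i\<le>n. divisor_sigma 1 i * divisor_sigma 1 (n - i)) + 6 * D = (\<Sum>d\<in>divisors n. T d)"
    by linarith
  moreover have "(\<Sum>d\<in>divisors n. T d) + 6 * n * divisor_sigma 1 n =
                 5 * divisor_sigma 3 n + divisor_sigma 1 n + 6 * D"
    using sum.cong[OF refl per_divisor, of "divisors n"]
    by (simp add: D_def divisor_sigma_def sum.distrib sum_distrib_left)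
  ultimately show ?thesis by linarith
qed

section \<open>q-expansions and the eta product\<close>

lemma divide_le_self: "0 \<le> x \<Longrightarrow> 1 \<le> y \<Longrightarrow> x / y \<le> (x::real)"
  by (simp add: divide_le_eq mult_le_cancel_left1)

lemma conv_radius_ge_1_if_polynomially_bounded:
  fixes c :: "nat \<Rightarrow> 'a::{banach, real_normed_div_algebra}"
  assumes "\<And>n. norm (c n) \<le> real n ^ k"
  shows "1 \<le> conv_radius c"
proof (rule conv_radius_geI_ex')
  fix r :: real assume r: "0 < r" "ereal r < 1"
  have "(\<lambda>n. (real n / real (Suc n)) ^ k) \<longlonglongrightarrow> 1"
    using tendsto_power[OF LIMSEQ_n_over_Suc_n, of k] by simp
  then have "(\<lambda>n. norm (real n ^ k) / norm (real (Suc n) ^ k)) \<longlonglongrightarrow> 1"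
    by (simp add: power_divide)
  then have "conv_radius (\<lambda>n. real n ^ k) = 1"
    by (intro conv_radius_ratio_limit_nonzero[of _ 1]) simp_all
  then have "summable (\<lambda>n. norm (real n ^ k * r ^ n))"
    using r by (intro abs_summable_in_conv_radius) simp
  then show "summable (\<lambda>n. c n * of_real r ^ n)"
  proof (rule summable_comparison_test')
    show "norm (c n * of_real r ^ n) \<le> norm (real n ^ k * r ^ n)" for n
      using assms[of n] r by (simp add: norm_mult norm_power mult_right_mono)
  qed
qed

lemma norm_less_fps_conv_radius:
  "norm z < 1 \<Longrightarrow> 1 \<le> fps_conv_radius f \<Longrightarrow> ereal (norm z) < fps_conv_radius f"
  by (rule less_le_trans[of _ 1]) simp_all

definition sigma_fps :: "nat \<Rightarrow> complex fps" where
  "sigma_fps k = Abs_fps (\<lambda>n. of_nat (divisor_sigma k n))"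

definition log_eta_fps :: "complex fps" where
  "log_eta_fps = Abs_fps (\<lambda>n. of_nat (divisor_sigma 1 n) / of_nat n)"

definition E2_fps :: "complex fps" where
  "E2_fps = 1 - 24 * sigma_fps 1"

definition E4_fps :: "complex fps" where
  "E4_fps = 1 + 240 * sigma_fps 3"

lemma fps_conv_radius_sigma_fps: "1 \<le> fps_conv_radius (sigma_fps k)"
  unfolding fps_conv_radius_def sigma_fps_def
proof (rule conv_radius_ge_1_if_polynomially_bounded)
  show "norm (fps_nth (Abs_fps (\<lambda>n. of_nat (divisor_sigma k n) :: complex)) n) \<le> real n ^ Suc k" for n
    using divisor_sigma_le[of k n] by (simp add: of_nat_le_iff [symmetric] del: of_nat_le_iff power_Suc)
qed

lemma fps_conv_radius_log_eta_fps: "1 \<le> fps_conv_radius log_eta_fps"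
  unfolding fps_conv_radius_def log_eta_fps_def
proof (rule conv_radius_ge_1_if_polynomially_bounded)
  fix n :: nat
  have "divisor_sigma 1 n \<le> n ^ 2"
    using divisor_sigma_le[of 1 n] by (simp add: numeral_2_eq_2)
  then have "real (divisor_sigma 1 n) \<le> real n ^ 2"
    by (metis of_nat_le_iff of_nat_power)
  moreover have "real (divisor_sigma 1 n) / real n \<le> real (divisor_sigma 1 n)"
    by (cases "n = 0") (simp_all add: divide_le_eq mult_le_cancel_left1)
  ultimately have "real (divisor_sigma 1 n) / real n \<le> real n ^ 2"
    by linarith
  then show "norm (fps_nth (Abs_fps (\<lambda>n. of_nat (divisor_sigma 1 n) / of_nat n :: complex)) n) \<le> real n ^ 2"
    by (simp add: norm_divide)
qed

lemma fps_conv_radius_ge_1_add: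
  "1 \<le> fps_conv_radius f \<Longrightarrow> 1 \<le> fps_conv_radius g \<Longrightarrow> 1 \<le> fps_conv_radius (f + g)"
  using fps_conv_radius_add[of f g] by (simp add: min_def split: if_splits)

lemma fps_conv_radius_ge_1_diff:
  "1 \<le> fps_conv_radius f \<Longrightarrow> 1 \<le> fps_conv_radius g \<Longrightarrow> 1 \<le> fps_conv_radius (f - g)"
  using fps_conv_radius_diff[of f g] by (simp add: min_def split: if_splits)

lemma fps_conv_radius_ge_1_mult:
  "1 \<le> fps_conv_radius f \<Longrightarrow> 1 \<le> fps_conv_radius g \<Longrightarrow> 1 \<le> fps_conv_radius (f * g)"
  using fps_conv_radius_mult[of f g] by (simp add: min_def split: if_splits)

lemma fps_conv_radius_E2_fps: "1 \<le> fps_conv_radius E2_fps"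
  unfolding E2_fps_def
  by (intro fps_conv_radius_ge_1_diff fps_conv_radius_ge_1_mult fps_conv_radius_sigma_fps) simp_all

lemma fps_conv_radius_E4_fps: "1 \<le> fps_conv_radius E4_fps"
  unfolding E4_fps_def
  by (intro fps_conv_radius_ge_1_add fps_conv_radius_ge_1_mult fps_conv_radius_sigma_fps) simp_all

lemma fps_X_mult_deriv_nth: "(fps_X * fps_deriv f) $ n = of_nat n * f $ n"
  by (cases n) (simp_all add: fps_X_mult_nth)

lemma fps_X_mult_deriv_log_eta_fps: "fps_X * fps_deriv log_eta_fps = sigma_fps 1"
  by (rule fps_ext) (simp add: fps_X_mult_deriv_nth log_eta_fps_def sigma_fps_def)

lemma ramanujan_E2_fps: "12 * (fps_X * fps_deriv E2_fps) = E2_fps^2 - E4_fps"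
proof (rule fps_ext)
  fix n
  let ?s1 = "\<lambda>i. of_nat (divisor_sigma 1 i) :: complex" and ?s3 = "of_nat (divisor_sigma 3 n) :: complex"
  have "of_nat (12 * (\<Sum>i\<le>n. divisor_sigma 1 i * divisor_sigma 1 (n - i)) + 6 * n * divisor_sigma 1 n) =
        (of_nat (5 * divisor_sigma 3 n + divisor_sigma 1 n) :: complex)"
    by (simp only: ramanujan_divisor_sigma_identity)
  then have conv: "12 * (\<Sum>i\<le>n. ?s1 i * ?s1 (n - i)) + 6 * of_nat n * ?s1 n = 5 * ?s3 + ?s1 n"
    by (simp only: of_nat_add of_nat_mult of_nat_sum of_nat_numeral)
  have square: "(sigma_fps 1 ^ 2) $ n = (\<Sum>i\<le>n. ?s1 i * ?s1 (n - i))"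
    by (simp add: power2_eq_square fps_mult_nth sigma_fps_def atLeast0AtMost)
  have "E2_fps^2 - E4_fps = 576 * sigma_fps 1 ^ 2 - 48 * sigma_fps 1 - 240 * sigma_fps 3"
    by (simp add: E2_fps_def E4_fps_def power2_eq_square algebra_simps)
  then have "(E2_fps^2 - E4_fps) $ n = 576 * (\<Sum>i\<le>n. ?s1 i * ?s1 (n - i)) - 48 * ?s1 n - 240 * ?s3"
    using square by (simp add: sigma_fps_def fps_numeral_nth)
  also have "\<dots> = - 288 * of_nat n * ?s1 n"
    using arg_cong[OF conv, of "\<lambda>z. 48 * z"] by (simp add: algebra_simps)
  also have "\<dots> = (12 * (fps_X * fps_deriv E2_fps)) $ n"
    by (cases "n = 0") (simp_all add: fps_X_mult_deriv_nth E2_fps_def sigma_fps_def fps_numeral_nth)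
  finally show "(12 * (fps_X * fps_deriv E2_fps)) $ n = (E2_fps^2 - E4_fps) $ n" ..
qed

definition divisor_pairs :: "nat \<Rightarrow> (nat \<times> nat) set" where
  "divisor_pairs n = {(m, k). Suc m * Suc k = n}"

lemma finite_divisor_pairs: "finite (divisor_pairs n)"
proof (rule finite_subset)
  show "divisor_pairs n \<subseteq> {..n} \<times> {..n}"
  proof
    fix p assume "p \<in> divisor_pairs n"
    then obtain m k where p: "p = (m, k)" "Suc m * Suc k = n" by (auto simp: divisor_pairs_def)
    moreover have "Suc m \<le> Suc m * Suc k" "Suc k \<le> Suc m * Suc k" by simp_all
    ultimately show "p \<in> {..n} \<times> {..n}" by auto
  qed
qed auto

lemma sum_divisor_pairs_inverse:
  "(\<Sum>(m,k)\<in>divisor_pairs n. 1 / of_nat (Suc k) :: complex) = of_nat (divisor_sigma 1 n) / of_nat n"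
proof (cases "n = 0")
  case True
  then show ?thesis by (simp add: divisor_pairs_def)
next
  case False
  have "(\<Sum>(m,k)\<in>divisor_pairs n. 1 / of_nat (Suc k) :: complex) =
        (\<Sum>(m,k)\<in>divisor_pairs n. of_nat (Suc m) / of_nat n)"
  proof (intro sum.cong refl, clarify)
    fix m k assume "(m, k) \<in> divisor_pairs n"
    then have "of_nat (Suc m) * of_nat (Suc k) = (of_nat n :: complex)"
      unfolding divisor_pairs_def by (metis (mono_tags) case_prod_conv mem_Collect_eq of_nat_mult)
    then show "1 / of_nat (Suc k) = (of_nat (Suc m) / of_nat n :: complex)"
      using False by (auto simp: field_simps simp del: of_nat_Suc)
  qed
  also have "\<dots> = (\<Sum>d\<in>divisors n. of_nat d) / of_nat n"
  proof -
    have "(\<Sum>(m,k)\<in>divisor_pairs n. of_nat (Suc m) :: complex) = (\<Sum>d\<in>divisors n. of_nat d)"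
    proof (rule sum.reindex_bij_witness[where j="\<lambda>(m,k). Suc m" and i="\<lambda>d. (d - 1, n div d - 1)"])
      fix p assume "p \<in> divisor_pairs n"
      then obtain m k where p: "p = (m, k)" "Suc m * Suc k = n" by (auto simp: divisor_pairs_def)
      then have "n div Suc m = Suc k" "Suc m dvd n" "Suc m \<le> n"
        by (metis nonzero_mult_div_cancel_left nat.distinct(1), metis dvd_triv_left,
            metis le_add1 mult_Suc_right)
      then show "(case case p of (m,k) \<Rightarrow> Suc m of d \<Rightarrow> (d - 1, n div d - 1)) = p"
        "(case p of (m,k) \<Rightarrow> Suc m) \<in> divisors n"
        "of_nat (case p of (m,k) \<Rightarrow> Suc m) = (case p of (m,k) \<Rightarrow> (of_nat (Suc m) :: complex))"
        using p by (auto simp: divisors_def)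
    next
      fix d assume "d \<in> divisors n"
      then have d: "1 \<le> d" "d * (n div d) = n" by (auto simp: divisors_def)
      then have "1 \<le> n div d" using False by (cases "n div d") auto
      with d have "Suc (d - 1) = d" "Suc (d - 1) * Suc (n div d - 1) = n" by simp_all
      then show "(case (d - 1, n div d - 1) of (m,k) \<Rightarrow> Suc m) = d"
        "(d - 1, n div d - 1) \<in> divisor_pairs n"
        by (simp_all only: divisor_pairs_def mem_Collect_eq case_prod_conv)
    qed
    then show ?thesis by (simp add: sum_divide_distrib [symmetric] case_prod_unfold)
  qed
  finally show ?thesis by (simp add: divisor_sigma_def)
qed

lemma has_sum_neg_ln_one_minus:
  fixes w :: complex
  assumes "norm w < 1"
  shows "((\<lambda>k. w ^ Suc k / of_nat (Suc k)) has_sum - ln (1 - w)) UNIV"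
proof -
  have "(\<lambda>n. - (w ^ n) / of_nat n) sums ln (1 - w)"
    using Ln_series'[of "- w"] assms by simp
  then have "(\<lambda>k. - (w ^ Suc k) / of_nat (Suc k)) sums ln (1 - w)"
    using sums_Suc_iff[where f="\<lambda>n. - (w ^ n) / of_nat n" and s="ln (1 - w)"] by simp
  then have "(\<lambda>k. w ^ Suc k / of_nat (Suc k)) sums - ln (1 - w)"
    using sums_minus by fastforce
  moreover have "summable (\<lambda>k. norm (w ^ Suc k / of_nat (Suc k)))"
  proof (rule summable_comparison_test'[OF summable_geometric[of "norm w"]])
    fix k :: nat
    have "norm (w ^ Suc k / of_nat (Suc k)) = norm w ^ Suc k / real (Suc k)"
      by (simp only: norm_divide norm_power norm_of_nat)
    also have "\<dots> \<le> norm w ^ Suc k"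
      by (rule divide_le_self) simp_all
    also have "\<dots> \<le> norm w ^ k"
      using assms by (intro power_decreasing) auto
    finally show "norm (norm (w ^ Suc k / of_nat (Suc k))) \<le> norm w ^ k"
      by simp
  qed (use assms in simp)
  ultimately show ?thesis
    by (intro norm_summable_imp_has_sum)
qed

lemma summable_on_lambert_terms:
  fixes q :: complex
  assumes "norm q < 1"
  shows "(\<lambda>(m, k). q ^ (Suc m * Suc k) / of_nat (Suc k)) summable_on UNIV"
proof -
  define r where "r = norm q"
  have r: "0 \<le> r" "r < 1" using assms by (auto simp: r_def)
  have "(\<lambda>(m, k). r ^ m * r ^ k) summable_on UNIV \<times> UNIV"
  proof (rule summable_on_SigmaI)
    show "((\<lambda>k. (\<lambda>(m, k). r ^ m * r ^ k) (m, k)) has_sum (r ^ m / (1 - r))) UNIV" for m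
      using sums_mult[OF geometric_sums[of r], of "r ^ m"] r
      by (intro sums_nonneg_imp_has_sum) simp_all
    show "(\<lambda>m. r ^ m / (1 - r)) summable_on UNIV"
      using summable_mult2[OF summable_geometric[of r], of "1 / (1 - r)"] r
      by (intro summable_nonneg_imp_summable_on) simp_all
  qed (use r in simp)
  then have geometric: "(\<lambda>(m, k). r ^ m * r ^ k) summable_on UNIV"
    by simp
  have "norm (q ^ (Suc m * Suc k) / of_nat (Suc k)) \<le> r ^ m * r ^ k" for m k
  proof -
    have "norm (q ^ (Suc m * Suc k) / of_nat (Suc k)) = r ^ (Suc m * Suc k) / real (Suc k)"
      by (simp only: norm_divide norm_power norm_of_nat r_def)
    also have "\<dots> \<le> r ^ (Suc m * Suc k)"
      by (rule divide_le_self) (simp_all add: r)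
    also have "\<dots> \<le> r ^ (m + k)"
      using r by (intro power_decreasing) auto
    finally show ?thesis
      by (simp add: power_add)
  qed
  then have "(\<lambda>p. norm ((\<lambda>(m, k). q ^ (Suc m * Suc k) / of_nat (Suc k)) p)) summable_on UNIV"
    by (intro Infinite_Sum.abs_summable_on_comparison_test'[OF geometric]) auto
  then show ?thesis
    by (rule abs_summable_summable)
qed

lemma sums_ln_one_minus_qpower:
  fixes q :: complex
  assumes q: "norm q < 1"
  shows "(\<lambda>m. ln (1 - q ^ Suc m)) sums - eval_fps log_eta_fps q"
proof -
  define F where "F = (\<lambda>(m, k). q ^ (Suc m * Suc k) / of_nat (Suc k))"
  define T where "T = infsum F UNIV"
  have F_sum: "(F has_sum T) (UNIV \<times> UNIV)"
    using summable_on_lambert_terms[OF q] by (simp add: F_def T_def has_sum_infsum)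
  have "((\<lambda>m. - ln (1 - q ^ Suc m)) has_sum T) UNIV"
  proof (rule has_sum_Sigma'[OF F_sum])
    fix m :: nat
    have "norm (q ^ Suc m) < 1"
      using q by (simp add: norm_power power_less_one_iff del: power_Suc)
    moreover have "(\<lambda>k. F (m, k)) = (\<lambda>k. (q ^ Suc m) ^ Suc k / of_nat (Suc k))"
      by (simp only: F_def case_prod_conv power_mult)
    ultimately show "((\<lambda>k. F (m, k)) has_sum - ln (1 - q ^ Suc m)) UNIV"
      using has_sum_neg_ln_one_minus[of "q ^ Suc m"] by simp
  qed
  then have rows: "(\<lambda>m. - ln (1 - q ^ Suc m)) sums T"
    by (rule has_sum_imp_sums)
  have "bij_betw snd (Sigma UNIV divisor_pairs) UNIV"
    by (rule bij_betwI[where g="\<lambda>(m, k). (Suc m * Suc k, (m, k))"]) (auto simp: divisor_pairs_def)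
  then have "((\<lambda>p. F (snd p)) has_sum T) (Sigma UNIV divisor_pairs)"
    using F_sum has_sum_reindex_bij_betw by fastforce
  then have "((\<lambda>n. fps_nth log_eta_fps n * q ^ n) has_sum T) UNIV"
  proof (rule has_sum_Sigma')
    fix n :: nat
    have "(\<Sum>p\<in>divisor_pairs n. F p) = (\<Sum>(m,k)\<in>divisor_pairs n. q ^ n * (1 / of_nat (Suc k)))"
      by (intro sum.cong refl) (auto simp: F_def divisor_pairs_def)
    also have "\<dots> = q ^ n * (\<Sum>(m,k)\<in>divisor_pairs n. 1 / of_nat (Suc k))"
      by (simp only: sum_distrib_left case_prod_unfold)
    also have "\<dots> = fps_nth log_eta_fps n * q ^ n"
      by (simp only: sum_divisor_pairs_inverse) (simp add: log_eta_fps_def)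
    finally show "((\<lambda>p. F (snd (n, p))) has_sum (fps_nth log_eta_fps n * q ^ n)) (divisor_pairs n)"
      using finite_divisor_pairs[of n] by (simp add: has_sum_finite_iff)
  qed
  then have "T = eval_fps log_eta_fps q"
    using sums_eval_fps[OF norm_less_fps_conv_radius[OF q fps_conv_radius_log_eta_fps]]
    by (metis has_sum_imp_sums sums_unique2)
  with rows show ?thesis
    using sums_minus by fastforce
qed

lemma prodinf_one_minus_qpower:
  fixes q :: complex
  assumes "norm q < 1"
  shows "(\<Prod>m. 1 - q ^ Suc m) = exp (- eval_fps log_eta_fps q)"
proof -
  have "1 - q ^ Suc m \<noteq> 0" for m
  proof
    assume "1 - q ^ Suc m = 0"
    then have "norm (q ^ Suc m) = 1" by simp
    moreover have "norm (q ^ Suc m) < 1"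
      using assms by (simp add: norm_power power_less_one_iff del: power_Suc)
    ultimately show False by simp
  qed
  then have "(\<Prod>m. 1 - q ^ Suc m) = (\<Prod>m. exp (ln (1 - q ^ Suc m)))"
    by simp
  also have "\<dots> = exp (- eval_fps log_eta_fps q)"
    using sums_ln_one_minus_qpower[OF assms] by (simp add: prodinf_exp sums_iff)
  finally show ?thesis .
qed

lemma norm_qnome_less_1: "0 < Im \<tau> \<Longrightarrow> norm (qnome \<tau>) < 1"
  by (simp add: qnome_def)

lemma qnome_has_field_derivative:
  "(qnome has_field_derivative 2 * complex_of_real pi * \<i> * qnome \<tau>) (at \<tau>)"
  unfolding qnome_def [abs_def] by (auto intro!: derivative_eq_intros)

lemma eval_fps_qnome_has_field_derivative:
  assumes "0 < Im \<tau>" "1 \<le> fps_conv_radius f"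
  shows "((\<lambda>t. eval_fps f (qnome t)) has_field_derivative
            2 * complex_of_real pi * \<i> * eval_fps (fps_X * fps_deriv f) (qnome \<tau>)) (at \<tau>)"
proof -
  have q: "ereal (norm (qnome \<tau>)) < fps_conv_radius (fps_deriv f)"
    using norm_less_fps_conv_radius[OF norm_qnome_less_1[OF assms(1)]]
      assms(2) fps_conv_radius_deriv[of f] order.trans by blast
  have "((\<lambda>t. eval_fps f (qnome t)) has_field_derivative
           eval_fps (fps_deriv f) (qnome \<tau>) * (2 * complex_of_real pi * \<i> * qnome \<tau>)) (at \<tau>)"
    by (rule DERIV_chain2[OF has_field_derivative_eval_fps qnome_has_field_derivative])
       (rule norm_less_fps_conv_radius[OF norm_qnome_less_1[OF assms(1)] assms(2)])
  moreover have "eval_fps (fps_X * fps_deriv f) (qnome \<tau>) = qnome \<tau> * eval_fps (fps_deriv f) (qnome \<tau>)"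
    using q by (subst eval_fps_mult) simp_all
  ultimately show ?thesis
    by (simp add: algebra_simps)
qed

lemma eval_fps_numeral_mult:
  "ereal (norm z) < fps_conv_radius f \<Longrightarrow> eval_fps (numeral c * f) z = numeral c * eval_fps f (z :: complex)"
  by (subst eval_fps_mult) simp_all

lemma norm_less_fps_conv_radius_numeral_mult:
  "ereal (norm z) < fps_conv_radius f \<Longrightarrow> ereal (norm z) < fps_conv_radius (numeral c * f :: complex fps)"
  using fps_conv_radius_mult[of "numeral c" f] by simp

lemma eval_E2_fps:
  assumes "norm z < 1"
  shows "eval_fps E2_fps z = 1 - 24 * eval_fps (sigma_fps 1) z"
proof -
  have z: "ereal (norm z) < fps_conv_radius (sigma_fps 1)"
    by (rule norm_less_fps_conv_radius[OF assms fps_conv_radius_sigma_fps])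
  then show ?thesis
    unfolding E2_fps_def
    by (subst eval_fps_diff) (simp_all add: eval_fps_numeral_mult norm_less_fps_conv_radius_numeral_mult)
qed

lemma eisenstein_E4_eq_eval_fps:
  assumes "0 < Im \<tau>"
  shows "eisenstein_E4 \<tau> = eval_fps E4_fps (qnome \<tau>)"
proof -
  define q where "q = qnome \<tau>"
  have q: "norm q < 1" using norm_qnome_less_1[OF assms] by (simp add: q_def)
  have "(\<lambda>n. fps_nth (sigma_fps 3) n * q ^ n) sums eval_fps (sigma_fps 3) q"
    by (rule sums_eval_fps[OF norm_less_fps_conv_radius[OF q fps_conv_radius_sigma_fps]])
  then have "(\<lambda>m. of_nat (sigma3 (Suc m)) * q ^ Suc m) sums eval_fps (sigma_fps 3) q"
    using sums_Suc_iff[where f="\<lambda>n. fps_nth (sigma_fps 3) n * q ^ n"]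
    by (simp add: sigma_fps_def sigma3_eq_divisor_sigma)
  moreover have "eval_fps E4_fps q = 1 + 240 * eval_fps (sigma_fps 3) q"
    unfolding E4_fps_def
    using norm_less_fps_conv_radius[OF q fps_conv_radius_sigma_fps]
    by (subst eval_fps_add) (simp_all add: eval_fps_numeral_mult norm_less_fps_conv_radius_numeral_mult)
  ultimately show ?thesis
    by (simp add: eisenstein_E4_def q_def sums_iff)
qed

definition eisenstein_E2 :: "complex \<Rightarrow> complex" where
  "eisenstein_E2 \<tau> = eval_fps E2_fps (qnome \<tau>)"

lemma dedekind_eta_pow4_eq_exp:
  assumes "0 < Im \<tau>"
  shows "dedekind_eta \<tau> ^ 4 = exp (complex_of_real pi * \<i> * \<tau> / 3 - 4 * eval_fps log_eta_fps (qnome \<tau>))"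
proof -
  have "dedekind_eta \<tau> = exp (2 * complex_of_real pi * \<i> * \<tau> / 24) * exp (- eval_fps log_eta_fps (qnome \<tau>))"
    by (simp only: dedekind_eta_def prodinf_one_minus_qpower[OF norm_qnome_less_1[OF assms]])
  also have "\<dots> = exp (2 * complex_of_real pi * \<i> * \<tau> / 24 - eval_fps log_eta_fps (qnome \<tau>))"
    by (simp only: diff_conv_add_uminus exp_add)
  finally have "dedekind_eta \<tau> = exp (2 * complex_of_real pi * \<i> * \<tau> / 24 - eval_fps log_eta_fps (qnome \<tau>))" .
  then have "dedekind_eta \<tau> ^ 4 = exp (of_nat 4 * (2 * complex_of_real pi * \<i> * \<tau> / 24 - eval_fps log_eta_fps (qnome \<tau>)))"
    by (simp only: exp_of_nat_mult)
  then show ?thesis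
    by (simp add: algebra_simps)
qed

lemma dedekind_eta_pow4_has_field_derivative:
  assumes "0 < Im \<tau>"
  shows "((\<lambda>t. dedekind_eta t ^ 4) has_field_derivative
            complex_of_real pi * \<i> / 3 * eisenstein_E2 \<tau> * dedekind_eta \<tau> ^ 4) (at \<tau>)"
proof -
  define ell where "ell t = complex_of_real pi * \<i> * t / 3 - 4 * eval_fps log_eta_fps (qnome t)" for t
  have q: "norm (qnome \<tau>) < 1"
    using norm_qnome_less_1[OF assms] .
  have "(ell has_field_derivative complex_of_real pi * \<i> / 3
          - 4 * (2 * complex_of_real pi * \<i> * eval_fps (fps_X * fps_deriv log_eta_fps) (qnome \<tau>))) (at \<tau>)"
  proof -
    have "((\<lambda>t. complex_of_real pi * \<i> * t / 3) has_field_derivative complex_of_real pi * \<i> / 3) (at \<tau>)"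
      by (auto intro!: derivative_eq_intros)
    then show ?thesis
      unfolding ell_def [abs_def]
      by (intro DERIV_diff DERIV_cmult eval_fps_qnome_has_field_derivative[OF assms fps_conv_radius_log_eta_fps])
  qed
  also have "complex_of_real pi * \<i> / 3
          - 4 * (2 * complex_of_real pi * \<i> * eval_fps (fps_X * fps_deriv log_eta_fps) (qnome \<tau>)) =
        complex_of_real pi * \<i> / 3 * eisenstein_E2 \<tau>"
    by (simp add: fps_X_mult_deriv_log_eta_fps eisenstein_E2_def eval_E2_fps[OF q] algebra_simps)
  finally have "((\<lambda>t. exp (ell t)) has_field_derivative
                 exp (ell \<tau>) * (complex_of_real pi * \<i> / 3 * eisenstein_E2 \<tau>)) (at \<tau>)"
    by (rule DERIV_chain2[OF DERIV_exp])
  moreover have eta: "exp (ell t) = dedekind_eta t ^ 4" if "0 < Im t" for t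
    using that by (simp add: ell_def dedekind_eta_pow4_eq_exp)
  ultimately have "((\<lambda>t. exp (ell t)) has_field_derivative
                 complex_of_real pi * \<i> / 3 * eisenstein_E2 \<tau> * dedekind_eta \<tau> ^ 4) (at \<tau>)"
    using assms by (simp add: mult.commute)
  then show ?thesis
    by (rule has_field_derivative_transform_within_open[where S="{t. 0 < Im t}"])
       (use assms eta in \<open>auto simp: open_halfspace_Im_gt\<close>)
qed

lemma eisenstein_E2_has_field_derivative:
  assumes "0 < Im \<tau>"
  shows "(eisenstein_E2 has_field_derivative
            complex_of_real pi * \<i> / 6 * (eisenstein_E2 \<tau> ^ 2 - eisenstein_E4 \<tau>)) (at \<tau>)"
proof -
  define q where "q = qnome \<tau>"
  have q: "norm q < 1"
    using norm_qnome_less_1[OF assms] by (simp add: q_def)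
  have radius: "1 \<le> fps_conv_radius (fps_X * fps_deriv E2_fps)"
    using fps_conv_radius_E2_fps fps_conv_radius_deriv[of E2_fps]
    by (intro fps_conv_radius_ge_1_mult) auto
  have "12 * eval_fps (fps_X * fps_deriv E2_fps) q = eval_fps (12 * (fps_X * fps_deriv E2_fps)) q"
    by (simp add: eval_fps_numeral_mult norm_less_fps_conv_radius[OF q radius])
  also have "\<dots> = eval_fps E2_fps q ^ 2 - eval_fps E4_fps q"
    unfolding ramanujan_E2_fps power2_eq_square
    using norm_less_fps_conv_radius[OF q fps_conv_radius_E2_fps]
      norm_less_fps_conv_radius[OF q fps_conv_radius_E4_fps]
      norm_less_fps_conv_radius[OF q fps_conv_radius_ge_1_mult[OF fps_conv_radius_E2_fps fps_conv_radius_E2_fps]]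
    by (simp add: eval_fps_diff eval_fps_mult)
  finally have "12 * eval_fps (fps_X * fps_deriv E2_fps) q = eisenstein_E2 \<tau> ^ 2 - eisenstein_E4 \<tau>"
    by (simp add: eisenstein_E2_def eisenstein_E4_eq_eval_fps[OF assms] q_def)
  then have "complex_of_real pi * \<i> / 6 * (eisenstein_E2 \<tau> ^ 2 - eisenstein_E4 \<tau>) =
             2 * complex_of_real pi * \<i> * eval_fps (fps_X * fps_deriv E2_fps) q"
    by (simp flip: \<open>12 * eval_fps (fps_X * fps_deriv E2_fps) q = eisenstein_E2 \<tau> ^ 2 - eisenstein_E4 \<tau>\<close>)
  moreover have "(eisenstein_E2 has_field_derivative
                   2 * complex_of_real pi * \<i> * eval_fps (fps_X * fps_deriv E2_fps) q) (at \<tau>)"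
    unfolding eisenstein_E2_def [abs_def] q_def
    by (rule eval_fps_qnome_has_field_derivative[OF assms fps_conv_radius_E2_fps])
  ultimately show ?thesis
    by metis
qed

section \<open>The Schwarzian of a primitive\<close>

lemma contour_integral_linepath_has_field_derivative:
  assumes "open S" "convex S" "g holomorphic_on S" "a \<in> S" "z \<in> S"
  shows "((\<lambda>w. contour_integral (linepath a w) g) has_field_derivative g z) (at z)"
proof -
  have "((\<lambda>w. contour_integral (linepath a w) g) has_field_derivative g z) (at z within S)"
  proof (rule triangle_contour_integrals_convex_primitive[OF holomorphic_on_imp_continuous_on[OF assms(3)] assms(4,2,5)])
    fix b c assume "b \<in> S" "c \<in> S"
    then have "convex hull {a, b, c} \<subseteq> S"
      using assms(2,4) by (intro hull_minimal) auto
    then have "g holomorphic_on convex hull {a, b, c}"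
      using assms(3) holomorphic_on_subset by blast
    then show "contour_integral (linepath a b) g + contour_integral (linepath b c) g
                 + contour_integral (linepath c a) g = 0"
      by (rule has_chain_integral_chain_integral3[OF Cauchy_theorem_triangle])
  qed
  then show ?thesis
    using at_within_open[OF assms(5,1)] by simp
qed

lemma f6_has_field_derivative:
  assumes "0 < Im \<tau>"
  shows "(f6 has_field_derivative dedekind_eta \<tau> ^ 4) (at \<tau>)"
proof -
  have "(\<lambda>t. dedekind_eta t ^ 4) holomorphic_on {t. 0 < Im t}"
    using dedekind_eta_pow4_has_field_derivative
    by (subst holomorphic_on_open) (auto simp: open_halfspace_Im_gt)
  then show ?thesis
    unfolding f6_def [abs_def] using assms
    by (intro contour_integral_linepath_has_field_derivative)
       (auto simp: open_halfspace_Im_gt convex_halfspace_Im_gt)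
qed

lemma schwarzian_of_primitive:
  fixes F g h :: "complex \<Rightarrow> complex"
  assumes "open S" "z \<in> S" "g z \<noteq> 0"
    and F: "\<And>w. w \<in> S \<Longrightarrow> (F has_field_derivative g w) (at w)"
    and g: "\<And>w. w \<in> S \<Longrightarrow> (g has_field_derivative h w * g w) (at w)"
    and h: "(h has_field_derivative h') (at z)"
  shows "schwarzian F z = h' - h z ^ 2 / 2"
proof -
  have F': "deriv F w = g w" if "w \<in> S" for w
    using F[OF that] by (rule DERIV_imp_deriv)
  have F'': "deriv (deriv F) w = h w * g w" if "w \<in> S" for w
  proof -
    have "deriv (deriv F) w = deriv g w"
      using eventually_nhds_in_open[OF assms(1) that] F'
      by (intro deriv_cong_ev) (auto elim: eventually_mono)
    then show ?thesis
      using g[OF that] by (simp add: DERIV_imp_deriv)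
  qed
  have "deriv (deriv (deriv F)) z = deriv (\<lambda>w. h w * g w) z"
    using eventually_nhds_in_open[OF assms(1,2)] F''
    by (intro deriv_cong_ev) (auto elim: eventually_mono)
  also have "\<dots> = h' * g z + h z * (h z * g z)"
    using DERIV_mult[OF h g[OF assms(2)]] by (intro DERIV_imp_deriv) (simp add: algebra_simps)
  finally have F''': "deriv (deriv (deriv F)) z = h' * g z + h z * (h z * g z)" .
  show ?thesis
    using assms(3)
    by (simp add: schwarzian_def numeral_3_eq_3 numeral_2_eq_2 F' F'' F''' assms(2)
        field_simps power2_eq_square)
qed

theorem proposition5p1:
  fixes \<tau> :: complex
  assumes "Im \<tau> > 0"
  shows "schwarzian f6 \<tau> = 2 * complex_of_real pi ^ 2 / 36 * eisenstein_E4 \<tau>"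
proof -
  let ?h = "\<lambda>t. complex_of_real pi * \<i> / 3 * eisenstein_E2 t"
  have "schwarzian f6 \<tau> =
          complex_of_real pi * \<i> / 3 * (complex_of_real pi * \<i> / 6 * (eisenstein_E2 \<tau> ^ 2 - eisenstein_E4 \<tau>))
          - ?h \<tau> ^ 2 / 2"
  proof (rule schwarzian_of_primitive[where S="{t. 0 < Im t}" and g="\<lambda>t. dedekind_eta t ^ 4" and h="?h"])
    show "(?h has_field_derivative
             complex_of_real pi * \<i> / 3 * (complex_of_real pi * \<i> / 6 * (eisenstein_E2 \<tau> ^ 2 - eisenstein_E4 \<tau>)))
          (at \<tau>)"
      by (intro DERIV_cmult eisenstein_E2_has_field_derivative assms)
    show "dedekind_eta \<tau> ^ 4 \<noteq> 0"
      using dedekind_eta_pow4_eq_exp[OF assms] by simp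
  qed (use assms f6_has_field_derivative dedekind_eta_pow4_has_field_derivative
        in \<open>auto simp: open_halfspace_Im_gt\<close>)
  also have "\<dots> = 2 * complex_of_real pi ^ 2 / 36 * eisenstein_E4 \<tau>"
    by (simp add: field_simps power2_eq_square)
  finally show ?thesis .
qed

end
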